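(* Let $n\ge 2$, let $\rho$ be an $n$-qubit entangled symmetric state, and let $\mathcal S$ be a collection of subsets of $[n]$ such that the hypergraph $([n],\mathcal S)$ is connected and some $S\in\mathcal S$ satisfies $|S|\ge l(\rho)$. Then for every density matrix $\sigma\in\mathcal C(\rho,\mathcal S)$ and every $T\subseteq[n]$ with $|T|\ge l(\rho)$, the marginal $\sigma_T$ is entangled.
   Context: Let $[n]=\{1,\dots,n\}$, $\mathcal H_{[n]}=(\mathbb C^2)^{\otimes n}$; for $S\subseteq[n]$, $\rho_S$ is the partial trace over the qubits outside $S$. A pure state is biseparable if it is a product $|\alpha\rangle_S\otimes|\beta\rangle_{\bar S}$ for some $\emptyset\ne S\subsetneq[n]$, and fully separable if separable with respect to every bipartition; mixed states are biseparable (fully separable) if convex combinations of such pure states; entangled = not fully separable; genuinely entangled = not biseparable. $\mathcal C(\rho,\mathcal S)=\{\sigma\text{ density matrix on }\mathcal H_{[n]}:\sigma_S=\rho_S\ \forall S\in\mathcal S\}$; $\mathcal S$ detects $\rho$'s GME if all elements of $\mathcal C(\rho,\mathcal S)$ are genuinely entangled; for genuinely entangled $\rho$, $l(\rho)=\min_{\mathcal S\text{ detects }\rho\text{'s GME}}\max_{S\in\mathcal S}|S|$. A state is symmetric if its range lies in the subspace of vectors invariant under swapping any two qubits. The hypergraph $([n],\mathcal S)$ is connected if for every partition of $[n]$ into nonempty $X,Y$ some $S\in\mathcal S$ intersects both. *)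

theory Defs
  imports Complex_Main
begin

text \<open>For a finite set A of qubit labels,
  the computational basis of the Hilbert space of the qubits in A is indexed by
  the subsets x of A (qubit i is in state 1 iff i is in x). A vector on A is a
  function nat set to complex (only values on Pow A matter); an operator on A is
  a matrix nat set to nat set to complex.\<close>

type_synonym qvec = "nat set \<Rightarrow> complex"
type_synonym qop = "nat set \<Rightarrow> nat set \<Rightarrow> complex"

definition qubits :: "nat \<Rightarrow> nat set" where
  "qubits n = {1..n}"

definition apply_op :: "nat set \<Rightarrow> qop \<Rightarrow> qvec \<Rightarrow> qvec" where
  "apply_op A M v = (\<lambda>x. \<Sum>y\<in>Pow A. M x y * v y)"

definition psd :: "nat set \<Rightarrow> qop \<Rightarrow> bool" where
  "psd A M \<longleftrightarrow> (\<forall>v::qvec.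
     (\<Sum>x\<in>Pow A. \<Sum>y\<in>Pow A. cnj (v x) * M x y * v y) \<in> \<real> \<and>
     Re (\<Sum>x\<in>Pow A. \<Sum>y\<in>Pow A. cnj (v x) * M x y * v y) \<ge> 0)"

definition trace_op :: "nat set \<Rightarrow> qop \<Rightarrow> complex" where
  "trace_op A M = (\<Sum>x\<in>Pow A. M x x)"

text \<open>Density matrix on the qubits A (matrix entries outside Pow A are 0, so that
  a density matrix is determined by the function).\<close>
definition density :: "nat set \<Rightarrow> qop \<Rightarrow> bool" where
  "density A M \<longleftrightarrow> psd A M \<and> trace_op A M = 1 \<and>
     (\<forall>x y. \<not> (x \<subseteq> A \<and> y \<subseteq> A) \<longrightarrow> M x y = 0)"

definition ptrace :: "nat set \<Rightarrow> nat set \<Rightarrow> qop \<Rightarrow> qop" where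
  "ptrace A S M = (\<lambda>x y. if x \<subseteq> S \<and> y \<subseteq> S
      then (\<Sum>z\<in>Pow (A - S). M (x \<union> z) (y \<union> z)) else 0)"

definition unit_vec :: "nat set \<Rightarrow> qvec \<Rightarrow> bool" where
  "unit_vec A v \<longleftrightarrow> (\<Sum>x\<in>Pow A. (cmod (v x))\<^sup>2) = 1"

definition product_wrt :: "nat set \<Rightarrow> nat set \<Rightarrow> qvec \<Rightarrow> bool" where
  "product_wrt A S v \<longleftrightarrow> (\<exists>\<alpha> \<beta> :: qvec.
      \<forall>x\<in>Pow A. v x = \<alpha> (x \<inter> S) * \<beta> (x - S))"

definition pure_bisep :: "nat set \<Rightarrow> qvec \<Rightarrow> bool" where
  "pure_bisep A v \<longleftrightarrow> (\<exists>S. S \<noteq> {} \<and> S \<subset> A \<and> product_wrt A S v)"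

definition pure_fullsep :: "nat set \<Rightarrow> qvec \<Rightarrow> bool" where
  "pure_fullsep A v \<longleftrightarrow> (\<forall>S. S \<noteq> {} \<and> S \<subset> A \<longrightarrow> product_wrt A S v)"

definition convex_pure :: "nat set \<Rightarrow> (qvec \<Rightarrow> bool) \<Rightarrow> qop \<Rightarrow> bool" where
  "convex_pure A P M \<longleftrightarrow> (\<exists>(k::nat) (p::nat \<Rightarrow> real) (vs::nat \<Rightarrow> qvec).
      (\<forall>i<k. p i \<ge> 0 \<and> unit_vec A (vs i) \<and> P (vs i)) \<and> (\<Sum>i<k. p i) = 1 \<and>
      (\<forall>x\<in>Pow A. \<forall>y\<in>Pow A.
         M x y = (\<Sum>i<k. complex_of_real (p i) * vs i x * cnj (vs i y))))"

definition biseparable :: "nat set \<Rightarrow> qop \<Rightarrow> bool" where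
  "biseparable A M \<longleftrightarrow> convex_pure A (pure_bisep A) M"

definition fully_separable :: "nat set \<Rightarrow> qop \<Rightarrow> bool" where
  "fully_separable A M \<longleftrightarrow> convex_pure A (pure_fullsep A) M"

definition entangled :: "nat set \<Rightarrow> qop \<Rightarrow> bool" where
  "entangled A M \<longleftrightarrow> \<not> fully_separable A M"

definition genuinely_entangled :: "nat set \<Rightarrow> qop \<Rightarrow> bool" where
  "genuinely_entangled A M \<longleftrightarrow> \<not> biseparable A M"

definition swap_lbl :: "nat \<Rightarrow> nat \<Rightarrow> nat set \<Rightarrow> nat set" where
  "swap_lbl i j x = (if (i \<in> x) = (j \<in> x) then x else (x - {i, j}) \<union> ({i, j} - x))"

definition symmetric_vec :: "nat set \<Rightarrow> qvec \<Rightarrow> bool" where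
  "symmetric_vec A v \<longleftrightarrow> (\<forall>i\<in>A. \<forall>j\<in>A. \<forall>x\<in>Pow A. v (swap_lbl i j x) = v x)"

definition symmetric_state :: "nat set \<Rightarrow> qop \<Rightarrow> bool" where
  "symmetric_state A M \<longleftrightarrow> (\<forall>v. symmetric_vec A (apply_op A M v))"

definition compat :: "nat \<Rightarrow> qop \<Rightarrow> nat set set \<Rightarrow> qop set" where
  "compat n \<rho> \<SS> = {\<sigma>. density (qubits n) \<sigma> \<and>
      (\<forall>S\<in>\<SS>. ptrace (qubits n) S \<sigma> = ptrace (qubits n) S \<rho>)}"

definition detects_GME :: "nat \<Rightarrow> qop \<Rightarrow> nat set set \<Rightarrow> bool" where
  "detects_GME n \<rho> \<SS> \<longleftrightarrow> \<SS> \<subseteq> Pow (qubits n) \<and>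
      (\<forall>\<sigma>\<in>compat n \<rho> \<SS>. genuinely_entangled (qubits n) \<sigma>)"

definition l_param :: "nat \<Rightarrow> qop \<Rightarrow> nat" where
  "l_param n \<rho> = (LEAST k. \<exists>\<SS>. detects_GME n \<rho> \<SS> \<and> (\<forall>S\<in>\<SS>. card S \<le> k))"

definition hyp_connected :: "nat set \<Rightarrow> nat set set \<Rightarrow> bool" where
  "hyp_connected V \<SS> \<longleftrightarrow> (\<forall>X Y. X \<noteq> {} \<and> Y \<noteq> {} \<and> X \<inter> Y = {} \<and> X \<union> Y = V \<longrightarrow>
      (\<exists>S\<in>\<SS>. S \<inter> X \<noteq> {} \<and> S \<inter> Y \<noteq> {}))"

end

theory Submission
  imports Defs
begin

text \<open>
  Call an operator card-invariant if its entry at \<open>(x, y)\<close> depends only on the Hamming weights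
  of the basis labels; for density matrices this is invariance under all qubit swaps, and a
  symmetric state \<open>\<rho>\<close> has it. If \<open>\<sigma>\<close> shares the marginal on a set containing qubits
  \<open>i\<close> and \<open>j\<close>, then \<open>tr (\<sigma> P\<^sub>i\<^sub>j) = tr (\<rho> P\<^sub>i\<^sub>j) = 1\<close> for the swap \<open>P\<^sub>i\<^sub>j\<close>,
  which for a density matrix forces \<open>\<sigma> P\<^sub>i\<^sub>j = \<sigma>\<close>; connectivity of the hypergraph then makes
  \<open>\<sigma>\<close> card-invariant as well.

  In a convex decomposition of a card-invariant state every pure component is symmetric, and a
  symmetric vector that is a product across some cut is a tensor power \<open>(a|0\<rangle> + b|1\<rangle>)\<^sup>\<otimes>\<^sup>k\<close>.
  Hence an entangled symmetric \<open>\<rho>\<close> is genuinely entangled, so \<open>l(\<rho>)\<close> is attained by some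
  detecting family; and a fully separable marginal \<open>\<sigma>\<^sub>T\<close> is a mixture of tensor powers. The
  same mixture of \<open>n\<close>-fold tensor powers is a biseparable state whose marginals of size at most
  \<open>|T|\<close> agree with those of \<open>\<sigma>\<close>, and through the large set \<open>S \<in> \<SS>\<close> with those of \<open>\<rho>\<close>.
  It is therefore compatible with \<open>\<rho>\<close> on a detecting family, a contradiction.
\<close>

section \<open>Subsets of qubits and swaps\<close>

lemma sum_Pow_binomial:
  fixes a b :: "'a::comm_semiring_1"
  assumes "finite A"
  shows "(\<Sum>X\<in>Pow A. a ^ (card A - card X) * b ^ card X) = (a + b) ^ card A"
proof -
  have "(\<Prod>x\<in>A. b + a) = (\<Sum>X\<in>Pow A. (\<Prod>x\<in>X. b) * (\<Prod>x\<in>A - X. a))"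
    by (rule prod_add[OF assms])
  also have "\<dots> = (\<Sum>X\<in>Pow A. a ^ (card A - card X) * b ^ card X)"
    by (rule sum.cong) (auto simp: card_Diff_subset finite_subset[OF _ assms] mult.commute)
  finally show ?thesis by (simp add: add.commute)
qed

lemma sum_Pow_Un_disjoint:
  assumes "finite X" "finite Y" "X \<inter> Y = {}"
  shows "(\<Sum>z\<in>Pow (X \<union> Y). F z) = (\<Sum>z1\<in>Pow X. \<Sum>z2\<in>Pow Y. F (z1 \<union> z2))"
proof -
  have "bij_betw (\<lambda>(a, b). a \<union> b) (Pow X \<times> Pow Y) (Pow (X \<union> Y))"
    by (rule bij_betw_byWitness[where f' = "\<lambda>z. (z \<inter> X, z \<inter> Y)"]) (use assms(3) in auto)
  then have "(\<Sum>z\<in>Pow (X \<union> Y). F z) = (\<Sum>p\<in>Pow X \<times> Pow Y. F (case p of (a, b) \<Rightarrow> a \<union> b))"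
    by (rule sum.reindex_bij_betw[symmetric])
  also have "\<dots> = (\<Sum>z1\<in>Pow X. \<Sum>z2\<in>Pow Y. F (z1 \<union> z2))"
    by (simp add: sum.cartesian_product split_def)
  finally show ?thesis .
qed

lemma sum_Pow_indicator:
  fixes f :: "nat set \<Rightarrow> 'a::semiring_1"
  assumes "finite A" "c \<in> Pow A"
  shows "(\<Sum>x\<in>Pow A. f x * (if x = c then 1 else 0)) = f c"
    and "(\<Sum>x\<in>Pow A. (if x = c then 1 else 0) * f x) = f c"
proof -
  have eq: "(\<lambda>x. f x * (if x = c then 1 else 0)) = (\<lambda>x. if x = c then f c else 0)"
    "(\<lambda>x. (if x = c then 1 else 0) * f x) = (\<lambda>x. if x = c then f c else 0)"
    by (simp_all add: fun_eq_iff)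
  show "(\<Sum>x\<in>Pow A. f x * (if x = c then 1 else 0)) = f c"
    unfolding eq(1) using assms by simp
  show "(\<Sum>x\<in>Pow A. (if x = c then 1 else 0) * f x) = f c"
    unfolding eq(2) using assms by simp
qed

lemma swap_lbl_subset: "i \<in> A \<Longrightarrow> j \<in> A \<Longrightarrow> x \<subseteq> A \<Longrightarrow> swap_lbl i j x \<subseteq> A"
  unfolding swap_lbl_def by auto

lemma swap_lbl_swap_lbl [simp]: "swap_lbl i j (swap_lbl i j x) = x"
  unfolding swap_lbl_def by auto

lemma swap_lbl_conjugate:
  "i \<noteq> j \<Longrightarrow> j \<noteq> k \<Longrightarrow> i \<noteq> k \<Longrightarrow>
    swap_lbl i k x = swap_lbl i j (swap_lbl j k (swap_lbl i j x))"
  unfolding swap_lbl_def by (auto split: if_splits)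

lemma swap_lbl_Un_disjoint:
  "i \<in> S \<Longrightarrow> j \<in> S \<Longrightarrow> z \<inter> S = {} \<Longrightarrow> swap_lbl i j (u \<union> z) = swap_lbl i j u \<union> z"
  unfolding swap_lbl_def by auto

lemma card_swap_lbl: "card (swap_lbl i j x) = card x"
proof (cases "(i \<in> x) = (j \<in> x)")
  case False
  then obtain a b where ab: "a \<in> x" "b \<notin> x" "swap_lbl i j x = insert b (x - {a})"
    by (cases "i \<in> x") (auto simp: swap_lbl_def)
  show ?thesis
  proof (cases "finite x")
    case True
    then have "card (insert b (x - {a})) = Suc (card (x - {a}))" using ab(2) by simp
    then show ?thesis using card.remove[OF True ab(1)] ab(3) by simp
  qed (simp add: ab(3))
qed (simp add: swap_lbl_def)

lemma bij_betw_swap_lbl_Pow: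
  assumes "i \<in> A" "j \<in> A"
  shows "bij_betw (swap_lbl i j) (Pow A) (Pow A)"
  by (rule bij_betw_byWitness[where f' = "swap_lbl i j"]) (use swap_lbl_subset[OF assms] in auto)

lemma swap_lbl_invariant_card_cong:
  assumes "finite A"
    and inv: "\<And>i j x. i \<in> A \<Longrightarrow> j \<in> A \<Longrightarrow> x \<subseteq> A \<Longrightarrow> g (swap_lbl i j x) = g x"
    and "x \<subseteq> A" "x' \<subseteq> A" "card x = card x'"
  shows "g x = g x'"
  using assms(3-5)
proof (induction "card (x - x')" arbitrary: x)
  case 0
  have fin: "finite x" "finite x'" using 0 assms(1) finite_subset by auto
  then have "x \<subseteq> x'" using 0(1) by auto
  then show ?case using card_subset_eq[OF fin(2) _ 0(4)] by simp
next
  case (Suc m)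
  have fin: "finite x" "finite x'" using Suc assms(1) finite_subset by auto
  have "card (x' - x) = card (x - x')"
    using fin Suc.prems(3) by (simp add: card_Diff_subset_Int Int_commute)
  then have "card (x - x') \<noteq> 0" "card (x' - x) \<noteq> 0" using Suc.hyps(2) by simp_all
  then have "x - x' \<noteq> {}" "x' - x \<noteq> {}" by (metis card.empty)+
  then obtain i j where i: "i \<in> x" "i \<notin> x'" and j: "j \<in> x'" "j \<notin> x" by blast
  have swap: "swap_lbl i j x = insert j (x - {i})" unfolding swap_lbl_def using i j by auto
  have "swap_lbl i j x - x' = (x - x') - {i}" using i j unfolding swap by auto
  then have "m = card (swap_lbl i j x - x')" using Suc.hyps(2) i fin by simp
  moreover have "swap_lbl i j x \<subseteq> A" using swap Suc.prems(1,2) j by auto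
  moreover have "card (swap_lbl i j x) = card x'" using Suc.prems(3) by (simp add: card_swap_lbl)
  ultimately have "g (swap_lbl i j x) = g x'" by (rule Suc.hyps(1)[OF _ _ Suc.prems(2)])
  moreover have "g (swap_lbl i j x) = g x" by (rule inv) (use Suc.prems(1,2) i j in auto)
  ultimately show ?case by simp
qed

section \<open>Positive semidefinite and permutation-invariant operators\<close>

definition qform :: "nat set \<Rightarrow> qop \<Rightarrow> qvec \<Rightarrow> qvec \<Rightarrow> complex" where
  "qform A M u w = (\<Sum>x\<in>Pow A. \<Sum>y\<in>Pow A. cnj (u x) * M x y * w y)"

definition basis_vec :: "nat set \<Rightarrow> qvec" where
  "basis_vec a = (\<lambda>z. if z = a then 1 else 0)"

lemma psd_qform: "psd A M \<Longrightarrow> qform A M v v \<in> \<real> \<and> Re (qform A M v v) \<ge> 0"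
  unfolding psd_def qform_def by blast

lemma qform_add_scaled:
  "qform A M (\<lambda>z. u z + c * w z) (\<lambda>z. u z + c * w z) =
     qform A M u u + c * qform A M u w + cnj c * qform A M w u + (c * cnj c) * qform A M w w"
  unfolding qform_def by (simp add: algebra_simps sum.distrib sum_distrib_left)

lemma cnj_basis_vec [simp]: "cnj (basis_vec a x) = basis_vec a x"
  by (simp add: basis_vec_def)

lemma qform_basis_left:
  assumes "finite A" "a \<in> Pow A"
  shows "qform A M (basis_vec a) w = (\<Sum>y\<in>Pow A. M a y * w y)"
proof -
  have "qform A M (basis_vec a) w = (\<Sum>x\<in>Pow A. basis_vec a x * (\<Sum>y\<in>Pow A. M x y * w y))"
    unfolding qform_def by (simp add: sum_distrib_left mult.assoc)
  then show ?thesis using sum_Pow_indicator(2)[OF assms] by (simp add: basis_vec_def)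
qed

lemma qform_basis:
  assumes "finite A" "a \<in> Pow A" "b \<in> Pow A"
  shows "qform A M (basis_vec a) (basis_vec b) = M a b"
  using qform_basis_left[OF assms(1,2)] sum_Pow_indicator(1)[OF assms(1,3)]
  by (simp add: basis_vec_def)

lemma linear_plus_quadratic_nonneg_imp_zero:
  fixes L Q :: real
  assumes "Q \<ge> 0" "\<And>t. t * L + t\<^sup>2 * Q \<ge> 0"
  shows "L = 0"
proof -
  define t where "t = - L / (Q + 1)"
  have L: "L = - (Q + 1) * t" using assms(1) unfolding t_def by (simp add: field_simps)
  have "t * L + t\<^sup>2 * Q = - t\<^sup>2" unfolding L by (simp add: power2_eq_square algebra_simps)
  then have "t = 0" using assms(2)[of t] by simp
  then show ?thesis using L by simp
qed

text \<open>Test the form with c real and with c purely imaginary.\<close>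
lemma sesquilinear_nonneg_imp_cross_zero:
  fixes \<beta> \<gamma> q :: complex
  assumes "q \<in> \<real>" "Re q \<ge> 0"
    and nonneg: "\<And>c. c * \<beta> + cnj c * \<gamma> + (c * cnj c) * q \<in> \<real> \<and>
      Re (c * \<beta> + cnj c * \<gamma> + (c * cnj c) * q) \<ge> 0"
  shows "\<gamma> = 0"
proof -
  have "Re (\<beta> + \<gamma>) = 0"
  proof (rule linear_plus_quadratic_nonneg_imp_zero[OF assms(2)])
    fix t :: real
    show "t * Re (\<beta> + \<gamma>) + t\<^sup>2 * Re q \<ge> 0"
      using nonneg[of "complex_of_real t"] by (simp add: power2_eq_square algebra_simps)
  qed
  moreover have "Im (\<gamma> - \<beta>) = 0"
  proof (rule linear_plus_quadratic_nonneg_imp_zero[OF assms(2)])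
    fix t :: real
    show "t * Im (\<gamma> - \<beta>) + t\<^sup>2 * Re q \<ge> 0"
      using nonneg[of "\<i> * t"] by (simp add: power2_eq_square algebra_simps)
  qed
  moreover have "Im (\<beta> + \<gamma>) = 0" "Re (\<beta> - \<gamma>) = 0"
    using nonneg[of 1] nonneg[of "\<i>"] assms(1) by (simp_all add: complex_is_Real_iff)
  ultimately show ?thesis by (simp add: complex_eq_iff)
qed

lemma psd_qform_zero_imp_kernel:
  assumes "psd A M" "finite A" "qform A M w w = 0" "a \<in> Pow A"
  shows "(\<Sum>y\<in>Pow A. M a y * w y) = 0"
proof -
  let ?e = "basis_vec a"
  have "qform A M ?e w = 0"
  proof (rule sesquilinear_nonneg_imp_cross_zero)
    show "qform A M ?e ?e \<in> \<real>" "Re (qform A M ?e ?e) \<ge> 0" using psd_qform[OF assms(1)] by auto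
    fix c
    show "c * qform A M w ?e + cnj c * qform A M ?e w + (c * cnj c) * qform A M ?e ?e \<in> \<real> \<and>
        Re (c * qform A M w ?e + cnj c * qform A M ?e w + (c * cnj c) * qform A M ?e ?e) \<ge> 0"
      using psd_qform[OF assms(1), of "\<lambda>z. w z + c * ?e z"] assms(3) by (simp add: qform_add_scaled)
  qed
  then show ?thesis using qform_basis_left[OF assms(2,4)] by simp
qed

lemma psd_hermitian:
  assumes "psd A M" "finite A" "a \<in> Pow A" "b \<in> Pow A"
  shows "M a b = cnj (M b a)"
proof -
  have ab: "qform A M (basis_vec a) (basis_vec b) = M a b" "qform A M (basis_vec b) (basis_vec a) = M b a"
    using qform_basis assms(2-4) by auto
  have "qform A M (basis_vec a) (basis_vec a) + c * M a b + cnj c * M b a +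
      (c * cnj c) * qform A M (basis_vec b) (basis_vec b) \<in> \<real>" for c
    using psd_qform[OF assms(1), of "\<lambda>z. basis_vec a z + c * basis_vec b z"]
    unfolding qform_add_scaled ab by blast
  from this[of 1] this[of "\<i>"] show ?thesis
    using psd_qform[OF assms(1)] by (simp add: complex_is_Real_iff complex_eq_iff)
qed

definition swap_invariant :: "nat set \<Rightarrow> qop \<Rightarrow> nat \<Rightarrow> nat \<Rightarrow> bool" where
  "swap_invariant A M i j \<longleftrightarrow> (\<forall>x\<in>Pow A. \<forall>y\<in>Pow A. M (swap_lbl i j x) y = M x y)"

lemma swap_invariant_refl: "swap_invariant A M i i"
  unfolding swap_invariant_def swap_lbl_def by simp

lemma swap_invariant_trans:
  assumes "i \<in> A" "j \<in> A" "k \<in> A" "swap_invariant A M i j" "swap_invariant A M j k"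
  shows "swap_invariant A M i k"
proof (cases "i = j \<or> j = k \<or> i = k")
  case True
  then show ?thesis using assms swap_invariant_refl by auto
next
  case False
  show ?thesis unfolding swap_invariant_def
  proof (intro ballI)
    fix x y assume x: "x \<in> Pow A" and y: "y \<in> Pow A"
    have x1: "swap_lbl i j x \<in> Pow A" and x2: "swap_lbl j k (swap_lbl i j x) \<in> Pow A"
      using swap_lbl_subset assms(1-3) x by auto
    have "M (swap_lbl i k x) y = M (swap_lbl i j (swap_lbl j k (swap_lbl i j x))) y"
      by (rule arg_cong[where f = "\<lambda>z. M z y"], rule swap_lbl_conjugate) (use False in auto)
    also have "\<dots> = M x y"
      using assms(4,5) x x1 x2 y unfolding swap_invariant_def by simp
    finally show "M (swap_lbl i k x) y = M x y" .
  qed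
qed

lemma psd_swap_invariant_iff_columns:
  assumes "psd A M" "finite A" "i \<in> A" "j \<in> A"
  shows "swap_invariant A M i j \<longleftrightarrow> (\<forall>x\<in>Pow A. \<forall>y\<in>Pow A. M x (swap_lbl i j y) = M x y)"
proof -
  have "M (swap_lbl i j x) y = M x y \<longleftrightarrow> M y (swap_lbl i j x) = M y x"
    if "x \<in> Pow A" "y \<in> Pow A" for x y
  proof -
    have "swap_lbl i j x \<in> Pow A" using swap_lbl_subset[OF assms(3,4)] that(1) by simp
    then have "M (swap_lbl i j x) y = cnj (M y (swap_lbl i j x))"
      by (rule psd_hermitian[OF assms(1,2) _ that(2)])
    moreover have "M x y = cnj (M y x)" by (rule psd_hermitian[OF assms(1,2) that])
    ultimately show ?thesis by (simp only: complex_cnj_cancel_iff)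
  qed
  then show ?thesis unfolding swap_invariant_def by blast
qed

definition card_invariant :: "nat set \<Rightarrow> qop \<Rightarrow> bool" where
  "card_invariant A M \<longleftrightarrow> (\<forall>x y x' y'. x \<subseteq> A \<longrightarrow> y \<subseteq> A \<longrightarrow> x' \<subseteq> A \<longrightarrow> y' \<subseteq> A \<longrightarrow>
      card x = card x' \<longrightarrow> card y = card y' \<longrightarrow> M x y = M x' y')"

lemma card_invariantD:
  "card_invariant A M \<Longrightarrow> x \<subseteq> A \<Longrightarrow> y \<subseteq> A \<Longrightarrow> x' \<subseteq> A \<Longrightarrow> y' \<subseteq> A \<Longrightarrow>
    card x = card x' \<Longrightarrow> card y = card y' \<Longrightarrow> M x y = M x' y'"
  unfolding card_invariant_def by blast

lemma card_invariant_imp_swap_invariant: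
  assumes "card_invariant A M" "i \<in> A" "j \<in> A"
  shows "swap_invariant A M i j"
  unfolding swap_invariant_def
proof (intro ballI)
  fix x y assume "x \<in> Pow A" "y \<in> Pow A"
  then show "M (swap_lbl i j x) y = M x y"
    using card_invariantD[OF assms(1), of "swap_lbl i j x" y x y] swap_lbl_subset[OF assms(2,3)]
    by (simp add: card_swap_lbl)
qed

lemma psd_swap_invariant_imp_card_invariant:
  assumes "psd A M" "finite A" and inv: "\<forall>i\<in>A. \<forall>j\<in>A. swap_invariant A M i j"
  shows "card_invariant A M"
  unfolding card_invariant_def
proof (intro allI impI)
  fix x y x' y' assume xy: "x \<subseteq> A" "y \<subseteq> A" "x' \<subseteq> A" "y' \<subseteq> A" "card x = card x'" "card y = card y'"
  have "M x y = M x' y"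
    by (rule swap_lbl_invariant_card_cong[of A "\<lambda>x. M x y", OF assms(2) _ xy(1,3,5)])
      (use inv xy(2) in \<open>auto simp: swap_invariant_def\<close>)
  also have "\<dots> = M x' y'"
    by (rule swap_lbl_invariant_card_cong[of A "\<lambda>y. M x' y", OF assms(2) _ xy(2,4,6)])
      (use inv xy(3) psd_swap_invariant_iff_columns[OF assms(1,2)] in blast)
  finally show "M x y = M x' y'" .
qed

lemma symmetric_state_imp_swap_invariant:
  assumes "symmetric_state A M" "finite A" "i \<in> A" "j \<in> A"
  shows "swap_invariant A M i j"
  unfolding swap_invariant_def
proof (intro ballI)
  fix x y assume "x \<in> Pow A" "y \<in> Pow A"
  moreover have "apply_op A M (basis_vec y) z = M z y" for z
    unfolding apply_op_def basis_vec_def by (rule sum_Pow_indicator(1)[OF assms(2) \<open>y \<in> Pow A\<close>])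
  ultimately show "M (swap_lbl i j x) y = M x y"
    using assms(1,3,4) unfolding symmetric_state_def symmetric_vec_def by metis
qed

lemma symmetric_state_card_invariant:
  assumes "finite A" "psd A M" "symmetric_state A M"
  shows "card_invariant A M"
  using psd_swap_invariant_imp_card_invariant[OF assms(2,1)] symmetric_state_imp_swap_invariant[OF assms(3,1)]
  by blast

text \<open>The nonnegative quadratic forms of the vectors \<open>basis_vec x - basis_vec (swap_lbl i j x)\<close>
  sum to \<open>2 tr M - 2 tr (M P\<^sub>i\<^sub>j) = 0\<close>, so each of these vectors lies in the kernel of \<open>M\<close>.\<close>
lemma psd_swap_trace_imp_swap_invariant:
  assumes psd: "psd A M" and A: "finite A" and ij: "i \<in> A" "j \<in> A"
    and tr: "(\<Sum>x\<in>Pow A. M (swap_lbl i j x) x) = trace_op A M"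
  shows "swap_invariant A M i j"
proof -
  define sw where "sw = swap_lbl i j"
  have bij: "bij_betw sw (Pow A) (Pow A)" unfolding sw_def by (rule bij_betw_swap_lbl_Pow[OF ij])
  have swP: "sw x \<in> Pow A" if "x \<in> Pow A" for x using swap_lbl_subset[OF ij] that unfolding sw_def by auto
  define d where "d x = (\<lambda>z. basis_vec x z + (-1) * basis_vec (sw x) z)" for x
  have qd: "qform A M (d x) (d x) = M x x - M x (sw x) - M (sw x) x + M (sw x) (sw x)"
    if "x \<in> Pow A" for x
    unfolding d_def qform_add_scaled using qform_basis[OF A] that swP[OF that] by simp
  have "(\<Sum>x\<in>Pow A. M x (sw x)) = (\<Sum>x\<in>Pow A. M (sw x) (sw (sw x)))"
    by (rule sum.reindex_bij_betw[OF bij, symmetric])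
  moreover have "(\<Sum>x\<in>Pow A. M (sw x) (sw x)) = (\<Sum>x\<in>Pow A. M x x)"
    by (rule sum.reindex_bij_betw[OF bij])
  ultimately have "(\<Sum>x\<in>Pow A. qform A M (d x) (d x)) = 0"
    using tr qd unfolding trace_op_def sw_def by (simp add: sum.distrib sum_subtractf)
  moreover have "\<forall>x\<in>Pow A. qform A M (d x) (d x) \<in> \<real> \<and> Re (qform A M (d x) (d x)) \<ge> 0"
    using psd_qform[OF psd] by blast
  ultimately have "Re (qform A M (d x) (d x)) = 0" if "x \<in> Pow A" for x
    using sum_nonneg_eq_0_iff[of "Pow A" "\<lambda>x. Re (qform A M (d x) (d x))"] A that
    by (simp flip: Re_sum)
  then have d0: "qform A M (d x) (d x) = 0" if "x \<in> Pow A" for x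
    using psd_qform[OF psd] that by (simp add: complex_is_Real_iff complex_eq_iff)
  have "M y (sw x) = M y x" if "x \<in> Pow A" "y \<in> Pow A" for x y
    using psd_qform_zero_imp_kernel[OF psd A d0[OF that(1)] that(2)]
      sum_Pow_indicator(1)[OF A that(1), of "M y"] sum_Pow_indicator(1)[OF A swP[OF that(1)], of "M y"]
    by (simp add: d_def basis_vec_def ring_distribs sum_subtractf)
  then show ?thesis
    using psd_swap_invariant_iff_columns[OF psd A ij] unfolding sw_def by blast
qed

section \<open>Convex decompositions and tensor powers\<close>

lemma convex_decomposition_psd:
  fixes p :: "nat \<Rightarrow> real"
  assumes dec: "\<forall>x\<in>Pow A. \<forall>y\<in>Pow A. M x y = (\<Sum>k<K. complex_of_real (p k) * vs k x * cnj (vs k y))"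
    and p: "\<forall>k<K. p k \<ge> 0"
  shows "psd A M"
  unfolding psd_def
proof
  fix v :: qvec
  define z where "z k = (\<Sum>x\<in>Pow A. cnj (v x) * vs k x)" for k
  have "(\<Sum>x\<in>Pow A. \<Sum>y\<in>Pow A. cnj (v x) * M x y * v y) =
      (\<Sum>x\<in>Pow A. \<Sum>y\<in>Pow A. \<Sum>k<K. complex_of_real (p k) * (cnj (v x) * vs k x) * cnj (cnj (v y) * vs k y))"
    using dec by (intro sum.cong refl) (simp add: sum_distrib_left sum_distrib_right algebra_simps)
  also have "\<dots> = (\<Sum>k<K. complex_of_real (p k) * (z k * cnj (z k)))"
    unfolding z_def
    by (simp add: sum_distrib_left sum_distrib_right algebra_simps sum.swap[of _ "{..<K}"])
  also have "\<dots> = complex_of_real (\<Sum>k<K. p k * (cmod (z k))\<^sup>2)"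
    by (simp only: of_real_sum of_real_mult complex_norm_square)
  moreover have "(\<Sum>k<K. p k * (cmod (z k))\<^sup>2) \<ge> 0" using p by (intro sum_nonneg) auto
  ultimately show "(\<Sum>x\<in>Pow A. \<Sum>y\<in>Pow A. cnj (v x) * M x y * v y) \<in> \<real> \<and>
      Re (\<Sum>x\<in>Pow A. \<Sum>y\<in>Pow A. cnj (v x) * M x y * v y) \<ge> 0"
    by simp
qed

text \<open>\<open>\<Sum>\<^sub>k p\<^sub>k |vs\<^sub>k x - vs\<^sub>k x'|\<^sup>2 = M x x - M x x' - M x' x + M x' x'\<close>, which vanishes
  when \<open>x'\<close> is obtained from \<open>x\<close> by a swap.\<close>
lemma card_invariant_decomposition_component_symmetric:
  fixes p :: "nat \<Rightarrow> real"
  assumes A: "finite A" and M: "card_invariant A M"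
    and dec: "\<forall>x\<in>Pow A. \<forall>y\<in>Pow A. M x y = (\<Sum>k<K. complex_of_real (p k) * vs k x * cnj (vs k y))"
    and p: "\<forall>k<K. p k \<ge> 0" and k: "k < K" "p k > 0"
  shows "symmetric_vec A (vs k)"
  unfolding symmetric_vec_def
proof (intro ballI)
  fix i j x assume ij: "i \<in> A" "j \<in> A" and x: "x \<in> Pow A"
  define x' where "x' = swap_lbl i j x"
  have x': "x' \<in> Pow A" "card x' = card x" unfolding x'_def using swap_lbl_subset ij x card_swap_lbl by auto
  have "complex_of_real (\<Sum>k<K. p k * (cmod (vs k x - vs k x'))\<^sup>2)
      = (\<Sum>k<K. complex_of_real (p k) * ((vs k x - vs k x') * cnj (vs k x - vs k x')))"
    by (simp only: of_real_sum of_real_mult complex_norm_square)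
  also have "\<dots> = M x x - M x x' - M x' x + M x' x'"
    using dec x x' by (simp add: algebra_simps sum.distrib sum_subtractf)
  also have "\<dots> = 0"
    using card_invariantD[OF M, of x x' x x] card_invariantD[OF M, of x' x x x] card_invariantD[OF M, of x' x' x x]
      x x' by simp
  finally have "(\<Sum>k<K. p k * (cmod (vs k x - vs k x'))\<^sup>2) = 0" by (simp only: of_real_eq_0_iff)
  moreover have "\<forall>k'\<in>{..<K}. 0 \<le> p k' * (cmod (vs k' x - vs k' x'))\<^sup>2" using p by simp
  ultimately have "\<forall>k'\<in>{..<K}. p k' * (cmod (vs k' x - vs k' x'))\<^sup>2 = 0"
    using sum_nonneg_eq_0_iff[OF finite_lessThan, of _ "\<lambda>k. p k * (cmod (vs k x - vs k x'))\<^sup>2"] by blast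
  then have "p k * (cmod (vs k x - vs k x'))\<^sup>2 = 0" using k(1) by simp
  then show "vs k (swap_lbl i j x) = vs k x" using k unfolding x'_def by simp
qed

text \<open>The coefficient of the basis vector \<open>x\<close> in \<open>(a|0\<rangle> + b|1\<rangle>)\<^sup>\<otimes>\<^sup>m\<close>.\<close>
definition tensor_power :: "nat \<Rightarrow> complex \<Rightarrow> complex \<Rightarrow> nat set \<Rightarrow> complex" where
  "tensor_power m a b x = a ^ (m - card x) * b ^ card x"

lemma product_wrt_tensor_power:
  assumes A: "finite A" and S: "S \<subseteq> A"
  shows "product_wrt A S (\<lambda>x. c * tensor_power (card A) a b x)"
  unfolding product_wrt_def
proof (intro exI ballI)
  fix x assume x: "x \<in> Pow A"
  have "finite x" "finite S" using x A S finite_subset by auto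
  then have fin: "finite (x \<inter> S)" "finite (x - S)" "finite S" "finite (A - S)" using A by auto
  have cx: "card x = card (x \<inter> S) + card (x - S)"
    using fin by (metis card_Un_disjoint Int_Diff_Un inf_commute Int_Diff_disjoint)
  have cA: "card A = card S + card (A - S)"
    using card_Diff_subset[OF fin(3) S] card_mono[OF A S] by simp
  have "card (x \<inter> S) \<le> card S" "card (x - S) \<le> card (A - S)" using fin x by (auto intro: card_mono)
  then have "card A - card x = (card S - card (x \<inter> S)) + (card (A - S) - card (x - S))"
    using cx cA by simp
  then show "c * tensor_power (card A) a b x =
      (c * tensor_power (card S) a b (x \<inter> S)) * tensor_power (card (A - S)) a b (x - S)"
    unfolding tensor_power_def cx by (simp add: power_add mult_ac)
qed

lemma pure_fullsep_tensor_power: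
  "finite A \<Longrightarrow> pure_fullsep A (\<lambda>x. c * tensor_power (card A) a b x)"
  unfolding pure_fullsep_def using product_wrt_tensor_power by blast

lemma unit_vec_tensor_power:
  assumes A: "finite A" and n: "a * cnj a + b * cnj b = 1"
  shows "unit_vec A (tensor_power (card A) a b)"
proof -
  have "complex_of_real (\<Sum>x\<in>Pow A. (cmod (tensor_power (card A) a b x))\<^sup>2)
      = (\<Sum>x\<in>Pow A. (a * cnj a) ^ (card A - card x) * (b * cnj b) ^ card x)"
    unfolding of_real_sum complex_norm_square tensor_power_def
    by (intro sum.cong refl) (simp add: power_mult_distrib mult_ac)
  also have "\<dots> = 1" using sum_Pow_binomial[OF A, of "a * cnj a" "b * cnj b"] n by simp
  finally show ?thesis unfolding unit_vec_def by (simp only: of_real_eq_1_iff)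
qed

text \<open>The phase of \<open>c\<close> cannot be absorbed, hence a statement about outer products.\<close>
lemma unit_vec_scaled_tensor_power:
  assumes A: "finite A" and u: "unit_vec A v"
    and v: "\<forall>x\<subseteq>A. v x = c * tensor_power (card A) x0 x1 x"
  obtains b0 b1 where "b0 * cnj b0 + b1 * cnj b1 = 1"
    "\<And>x y. x \<subseteq> A \<Longrightarrow> y \<subseteq> A \<Longrightarrow>
       v x * cnj (v y) = tensor_power (card A) b0 b1 x * cnj (tensor_power (card A) b0 b1 y)"
proof -
  define k where "k = card A"
  define R where "R = (cmod x0)\<^sup>2 + (cmod x1)\<^sup>2"
  have "1 = (\<Sum>x\<in>Pow A. (cmod (v x))\<^sup>2)" using u unfolding unit_vec_def by simp
  also have "\<dots> = (\<Sum>x\<in>Pow A. (cmod c)\<^sup>2 * (((cmod x0)\<^sup>2) ^ (k - card x) * ((cmod x1)\<^sup>2) ^ card x))"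
    using v unfolding tensor_power_def k_def
    by (intro sum.cong refl) (simp add: norm_mult norm_power power_mult_distrib mult.commute flip: power_mult)
  also have "\<dots> = (cmod c)\<^sup>2 * R ^ k"
    unfolding sum_distrib_left[symmetric] R_def k_def
    using sum_Pow_binomial[OF A, of "(cmod x0)\<^sup>2" "(cmod x1)\<^sup>2"] by simp
  finally have cR: "(cmod c)\<^sup>2 * R ^ k = 1" by simp
  show ?thesis
  proof (cases "k = 0")
    case True
    then have "A = {}" unfolding k_def using A by simp
    moreover have "c * cnj c = 1" using cR True complex_norm_square[of c] by simp
    ultimately show ?thesis using v that[of 1 0] unfolding tensor_power_def by simp
  next
    case False
    have "R \<ge> 0" unfolding R_def by simp
    moreover have "R \<noteq> 0" using cR False by (metis mult_zero_right zero_neq_one zero_power gr0I)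
    ultimately have Rpos: "R > 0" by simp
    define r where "r = sqrt R"
    have rpos: "r > 0" and r2: "r\<^sup>2 = R" unfolding r_def using Rpos by simp_all
    define b0 where "b0 = x0 / complex_of_real r"
    define b1 where "b1 = x1 / complex_of_real r"
    have "b0 * cnj b0 + b1 * cnj b1 = (x0 * cnj x0 + x1 * cnj x1) / complex_of_real (r\<^sup>2)"
      unfolding b0_def b1_def by (simp add: power2_eq_square add_divide_distrib)
    also have "x0 * cnj x0 + x1 * cnj x1 = complex_of_real R"
      unfolding R_def of_real_add complex_norm_square by (rule refl)
    finally have norm: "b0 * cnj b0 + b1 * cnj b1 = 1" using r2 Rpos by simp
    have tp: "tensor_power k b0 b1 x = tensor_power k x0 x1 x / complex_of_real r ^ k" if "x \<subseteq> A" for x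
    proof -
      have "k = (k - card x) + card x" unfolding k_def using that A by (simp add: card_mono)
      then have "complex_of_real r ^ k = complex_of_real r ^ (k - card x) * complex_of_real r ^ card x"
        by (metis power_add)
      then show ?thesis unfolding tensor_power_def b0_def b1_def by (simp add: power_divide)
    qed
    have "(cmod c)\<^sup>2 = 1 / R ^ k" using cR Rpos by (simp add: field_simps)
    moreover have "R ^ k = r ^ k * r ^ k" using r2 by (metis power_mult_distrib power2_eq_square)
    ultimately have cc: "c * cnj c = 1 / (complex_of_real r ^ k * complex_of_real r ^ k)"
      using complex_norm_square[of c] by simp
    show ?thesis
    proof (rule that[OF norm])
      fix x y assume x: "x \<subseteq> A" and y: "y \<subseteq> A"
      have "v x * cnj (v y) = (c * cnj c) * (tensor_power k x0 x1 x * cnj (tensor_power k x0 x1 y))"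
        using v x y unfolding k_def by simp
      also have "\<dots> = tensor_power k b0 b1 x * cnj (tensor_power k b0 b1 y)"
        unfolding cc tp[OF x] tp[OF y] using rpos by (simp add: field_simps)
      finally show "v x * cnj (v y) = tensor_power (card A) b0 b1 x * cnj (tensor_power (card A) b0 b1 y)"
        unfolding k_def .
    qed
  qed
qed

section \<open>Symmetric product vectors\<close>

lemma split_product_geometric_of_nonzero:
  fixes f A B :: "nat \<Rightarrow> complex"
  assumes s: "s \<ge> 1" and r: "r \<ge> 1"
    and split: "\<And>a b. a \<le> s \<Longrightarrow> b \<le> r \<Longrightarrow> f (a + b) = A a * B b"
    and f0: "f 0 \<noteq> 0"
  obtains t where "\<And>m. m \<le> s + r \<Longrightarrow> f m = f 0 * t ^ m"
proof -
  have A0: "A 0 \<noteq> 0" and B0: "B 0 \<noteq> 0" using split[of 0 0] f0 by auto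
  define t where "t = B 1 / B 0"
  have A: "A a = A 0 * t ^ a" if "a \<le> s" for a
    using that
  proof (induction a)
    case (Suc a)
    have "A (Suc a) * B 0 = A a * B 1" using split[of "Suc a" 0] split[of a 1] Suc.prems r by simp
    then have "A (Suc a) = A a * t" unfolding t_def using B0 by (simp add: field_simps)
    then show ?case using Suc by simp
  qed simp
  have B: "B b = B 0 * t ^ b" if "b \<le> r" for b
    using that
  proof (induction b)
    case (Suc b)
    have "A 0 * B (Suc b) = A 1 * B b" using split[of 0 "Suc b"] split[of 1 b] Suc.prems s by simp
    then have "B (Suc b) = B b * t" using A[of 1] s A0 by (simp add: field_simps)
    then show ?case using Suc by simp
  qed simp
  show ?thesis
  proof (rule that)
    fix m assume m: "m \<le> s + r"
    define a where "a = min m s"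
    have ab: "a \<le> s" "m - a \<le> r" "m = a + (m - a)" unfolding a_def using m by auto
    have "f m = A a * B (m - a)" using split[OF ab(1,2)] ab(3) by simp
    also have "\<dots> = (A 0 * B 0) * (t ^ a * t ^ (m - a))" using A[OF ab(1)] B[OF ab(2)] by (simp add: mult_ac)
    also have "t ^ a * t ^ (m - a) = t ^ m" using ab(3) by (metis power_add)
    finally show "f m = f 0 * t ^ m" using split[of 0 0] by simp
  qed
qed

lemma split_product_square:
  fixes f A B :: "nat \<Rightarrow> complex"
  assumes s: "s \<ge> 1" and r: "r \<ge> 1"
    and split: "\<And>a b. a \<le> s \<Longrightarrow> b \<le> r \<Longrightarrow> f (a + b) = A a * B b"
    and m: "1 \<le> m" "m + 1 \<le> s + r"
  shows "f m * f m = f (m - 1) * f (m + 1)"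
proof -
  define b where "b = (if m \<le> s then 1 else m - s + 1)"
  define a where "a = m - b"
  have ab: "a + 1 \<le> s" "1 \<le> b" "b \<le> r" "a + b = m" unfolding a_def b_def using s r m by auto
  have "f m * f m = (A a * B b) * (A (a + 1) * B (b - 1))"
    using split[of a b] split[of "a + 1" "b - 1"] ab by simp
  also have "\<dots> = (A a * B (b - 1)) * (A (a + 1) * B b)" by (simp add: ac_simps)
  also have "\<dots> = f (m - 1) * f (m + 1)"
    using split[of a "b - 1"] split[of "a + 1" b] ab by simp
  finally show ?thesis .
qed

text \<open>If \<open>f 0 = 0\<close> the same argument runs backwards from \<open>f (s + r)\<close>; if both ends vanish,
  \<open>f m\<^sup>2 = f (m - 1) f (m + 1)\<close> propagates the zero.\<close>
lemma split_product_geometric: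
  fixes f A B :: "nat \<Rightarrow> complex"
  assumes s: "s \<ge> 1" and r: "r \<ge> 1"
    and split: "\<And>a b. a \<le> s \<Longrightarrow> b \<le> r \<Longrightarrow> f (a + b) = A a * B b"
  obtains c x y where "\<And>m. m \<le> s + r \<Longrightarrow> f m = c * x ^ (s + r - m) * y ^ m"
proof (cases "f 0 \<noteq> 0")
  case True
  then obtain t where t: "\<And>m. m \<le> s + r \<Longrightarrow> f m = f 0 * t ^ m"
    using split_product_geometric_of_nonzero[of s r f A B, OF s r split] by blast
  show ?thesis
  proof (rule that[of "f 0" 1 t])
    fix m assume "m \<le> s + r"
    then show "f m = f 0 * 1 ^ (s + r - m) * t ^ m" using t[of m] by simp
  qed
next
  case f0: False
  show ?thesis
  proof (cases "f (s + r) \<noteq> 0")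
    case True
    define g where "g m = f (s + r - m)" for m
    have gsplit: "g (a + b) = A (s - a) * B (r - b)" if "a \<le> s" "b \<le> r" for a b
    proof -
      have "s + r - (a + b) = (s - a) + (r - b)" using that by simp
      then show ?thesis unfolding g_def using split[of "s - a" "r - b"] by simp
    qed
    have "g 0 \<noteq> 0" unfolding g_def using True by simp
    then obtain t where t: "\<And>m. m \<le> s + r \<Longrightarrow> g m = g 0 * t ^ m"
      using split_product_geometric_of_nonzero[of s r g "\<lambda>a. A (s - a)" "\<lambda>b. B (r - b)", OF s r gsplit]
      by blast
    show ?thesis
    proof (rule that[of "f (s + r)" t 1])
      fix m assume "m \<le> s + r"
      then show "f m = f (s + r) * t ^ (s + r - m) * 1 ^ m" using t[of "s + r - m"] by (simp add: g_def)
    qed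
  next
    case False
    have "f m = 0" if "m \<le> s + r" for m
      using that
    proof (induction m)
      case (Suc m)
      show ?case
      proof (cases "Suc m = s + r")
        case False
        then have "f (Suc m) * f (Suc m) = f m * f (Suc m + 1)"
          using split_product_square[of s r f A B, OF s r split, of "Suc m"] Suc.prems by simp
        then show ?thesis using Suc by simp
      qed (use \<open>\<not> f (s + r) \<noteq> 0\<close> in simp)
    qed (use f0 in simp)
    then show ?thesis using that[of 0 0 0] by simp
  qed
qed

lemma symmetric_vec_card_cong:
  assumes "finite A" "symmetric_vec A v" "x \<subseteq> A" "x' \<subseteq> A" "card x = card x'"
  shows "v x = v x'"
  by (rule swap_lbl_invariant_card_cong[OF assms(1) _ assms(3-5)])
    (use assms(2) in \<open>auto simp: symmetric_vec_def\<close>)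

text \<open>Along the bipartition \<open>S | A - S\<close>, \<open>v\<close> as a function of the Hamming weight splits as
  \<open>f (a + b) = \<alpha> a * \<beta> b\<close>.\<close>
lemma symmetric_product_vec_eq_tensor_power:
  assumes A: "finite A" and S: "S \<subseteq> A" "S \<noteq> {}" "S \<noteq> A"
    and sym: "symmetric_vec A v" and prod: "product_wrt A S v"
  obtains c x0 x1 where "\<And>x. x \<subseteq> A \<Longrightarrow> v x = c * tensor_power (card A) x0 x1 x"
proof -
  obtain \<alpha> \<beta> where prod: "\<forall>x\<in>Pow A. v x = \<alpha> (x \<inter> S) * \<beta> (x - S)"
    using prod unfolding product_wrt_def by blast
  define s where "s = card S"
  define r where "r = card (A - S)"
  have fS: "finite S" "finite (A - S)" using A S finite_subset by auto
  have s1: "s \<ge> 1" and r1: "r \<ge> 1" unfolding s_def r_def using fS S by (auto simp: Suc_le_eq card_gt_0_iff)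
  have cA: "card A = s + r" unfolding s_def r_def
    using card_Diff_subset[OF fS(1) S(1)] card_mono[OF A S(1)] by simp
  have "\<forall>a\<in>{..s}. \<exists>X. X \<subseteq> S \<and> card X = a"
    unfolding s_def using obtain_subset_with_card_n by (metis atMost_iff)
  from bchoice[OF this] obtain U where "\<forall>a\<in>{..s}. U a \<subseteq> S \<and> card (U a) = a" by blast
  then have U: "\<And>a. a \<le> s \<Longrightarrow> U a \<subseteq> S \<and> card (U a) = a" by simp
  have "\<forall>b\<in>{..r}. \<exists>X. X \<subseteq> A - S \<and> card X = b"
    unfolding r_def using obtain_subset_with_card_n by (metis atMost_iff)
  from bchoice[OF this] obtain W where "\<forall>b\<in>{..r}. W b \<subseteq> A - S \<and> card (W b) = b" by blast
  then have W: "\<And>b. b \<le> r \<Longrightarrow> W b \<subseteq> A - S \<and> card (W b) = b" by simp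
  have UW: "U a \<union> W b \<subseteq> A" "card (U a \<union> W b) = a + b"
    "(U a \<union> W b) \<inter> S = U a" "(U a \<union> W b) - S = W b" if "a \<le> s" "b \<le> r" for a b
  proof -
    have u: "U a \<subseteq> S" "card (U a) = a" and w: "W b \<subseteq> A - S" "card (W b) = b"
      using U[OF that(1)] W[OF that(2)] by auto
    have "finite (U a)" "finite (W b)" using finite_subset[OF u(1) fS(1)] finite_subset[OF w(1) fS(2)] by auto
    then show "card (U a \<union> W b) = a + b" using u w by (subst card_Un_disjoint) auto
    show "U a \<union> W b \<subseteq> A" "(U a \<union> W b) \<inter> S = U a" "(U a \<union> W b) - S = W b" using u w S by auto
  qed
  define f where "f m = v (U (min m s) \<union> W (m - min m s))" for m
  have vf: "v x = f (card x)" if "x \<subseteq> A" for x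
  proof -
    have "card x \<le> s + r" using card_mono[OF A that] cA by simp
    then show ?thesis
      unfolding f_def using UW[of "min (card x) s" "card x - min (card x) s"]
      by (intro symmetric_vec_card_cong[OF A sym that]) auto
  qed
  have fsplit: "f (a + b) = \<alpha> (U a) * \<beta> (W b)" if "a \<le> s" "b \<le> r" for a b
    using vf[OF UW(1)[OF that]] prod UW[OF that] by simp
  obtain c x0 x1 where g: "\<And>m. m \<le> s + r \<Longrightarrow> f m = c * x0 ^ (s + r - m) * x1 ^ m"
    using split_product_geometric[of s r f "\<lambda>a. \<alpha> (U a)" "\<lambda>b. \<beta> (W b)", OF s1 r1 fsplit] by blast
  show ?thesis
  proof (rule that)
    fix x assume x: "x \<subseteq> A"
    have "card x \<le> s + r" using card_mono[OF A x] cA by simp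
    then show "v x = c * tensor_power (card A) x0 x1 x"
      using vf[OF x] g cA unfolding tensor_power_def by (simp add: mult.assoc)
  qed
qed

lemma symmetric_fullsep_vec_eq_tensor_power:
  assumes T: "finite T" and sym: "symmetric_vec T v" and fs: "pure_fullsep T v"
  obtains c x0 x1 where "\<And>x. x \<subseteq> T \<Longrightarrow> v x = c * tensor_power (card T) x0 x1 x"
proof (cases "card T \<ge> 2")
  case True
  then obtain t where t: "t \<in> T" by fastforce
  moreover have "{t} \<noteq> T" using True by auto
  ultimately have "product_wrt T {t} v" using fs unfolding pure_fullsep_def by blast
  with t \<open>{t} \<noteq> T\<close> show ?thesis
    using symmetric_product_vec_eq_tensor_power[of T "{t}" v, OF T _ _ _ sym] that by blast
next
  case False
  then have "card T = 0 \<or> card T = 1" by auto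
  then consider "T = {}" | t where "T = {t}" using T card_1_singletonE by auto
  then show ?thesis
  proof cases
    case 1
    then show ?thesis using that[of "v {}" 1 1] unfolding tensor_power_def by auto
  next
    case 2
    show ?thesis
    proof (rule that[of 1 "v {}" "v T"])
      fix x assume "x \<subseteq> T"
      then have "x = {} \<or> x = T" using 2 by auto
      then show "v x = 1 * tensor_power (card T) (v {}) (v T) x" unfolding tensor_power_def 2 by auto
    qed
  qed
qed

section \<open>Mixtures of tensor powers\<close>

definition tensor_power_mixture ::
    "nat set \<Rightarrow> nat \<Rightarrow> (nat \<Rightarrow> real) \<Rightarrow> (nat \<Rightarrow> complex) \<Rightarrow> (nat \<Rightarrow> complex) \<Rightarrow> qop" where
  "tensor_power_mixture A K p a b = (\<lambda>x y. if x \<subseteq> A \<and> y \<subseteq> A then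
     (\<Sum>k<K. complex_of_real (p k) * tensor_power (card A) (a k) (b k) x *
        cnj (tensor_power (card A) (a k) (b k) y)) else 0)"

lemma card_invariant_tensor_power_mixture: "card_invariant A (tensor_power_mixture A K p a b)"
  unfolding card_invariant_def tensor_power_mixture_def
  by (auto intro!: sum.cong simp: tensor_power_def)

lemma sum_Pow_tensor_power_outer:
  assumes A: "finite A" and W: "W \<subseteq> A" and uv: "u \<subseteq> W" "v \<subseteq> W"
    and norm: "a * cnj a + b * cnj b = 1"
  shows "(\<Sum>z\<in>Pow (A - W). tensor_power (card A) a b (u \<union> z) * cnj (tensor_power (card A) a b (v \<union> z)))
    = tensor_power (card W) a b u * cnj (tensor_power (card W) a b v)"
proof -
  define m where "m = card (A - W)"
  have fin: "finite W" "finite (A - W)" using A W finite_subset by auto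
  have cA: "card A = card W + m" unfolding m_def using A W by (simp add: card_Diff_subset fin(1) card_mono)
  have "card u \<le> card W" "card v \<le> card W" using uv fin by (auto intro: card_mono)
  have "tensor_power (card A) a b (u \<union> z) * cnj (tensor_power (card A) a b (v \<union> z)) =
      tensor_power (card W) a b u * cnj (tensor_power (card W) a b v) *
      ((a * cnj a) ^ (m - card z) * (b * cnj b) ^ card z)" if z: "z \<in> Pow (A - W)" for z
  proof -
    have "finite z" "finite u" "finite v" using finite_subset[OF _ fin(2)] finite_subset[OF _ fin(1)] z uv by auto
    moreover have "z \<inter> u = {}" "z \<inter> v = {}" using z uv by auto
    ultimately have "card (u \<union> z) = card u + card z" "card (v \<union> z) = card v + card z"
      by (simp_all add: card_Un_disjoint inf_commute)
    moreover have "card z \<le> m" unfolding m_def using z fin by (auto intro: card_mono)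
    ultimately have "card A - card (u \<union> z) = (card W - card u) + (m - card z)"
      "card A - card (v \<union> z) = (card W - card v) + (m - card z)"
      using cA \<open>card u \<le> card W\<close> \<open>card v \<le> card W\<close> by simp_all
    then show ?thesis using \<open>card (u \<union> z) = _\<close> \<open>card (v \<union> z) = _\<close>
      unfolding tensor_power_def by (simp add: power_add power_mult_distrib mult_ac)
  qed
  then have "(\<Sum>z\<in>Pow (A - W). tensor_power (card A) a b (u \<union> z) * cnj (tensor_power (card A) a b (v \<union> z)))
    = tensor_power (card W) a b u * cnj (tensor_power (card W) a b v) *
      (\<Sum>z\<in>Pow (A - W). (a * cnj a) ^ (m - card z) * (b * cnj b) ^ card z)"
    by (simp add: sum_distrib_left)
  also have "(\<Sum>z\<in>Pow (A - W). (a * cnj a) ^ (m - card z) * (b * cnj b) ^ card z) = 1"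
    using sum_Pow_binomial[OF fin(2), of "a * cnj a" "b * cnj b"] norm unfolding m_def by simp
  finally show ?thesis by simp
qed

lemma ptrace_tensor_power_mixture:
  assumes A: "finite A" and W: "W \<subseteq> A" and norm: "\<forall>k<K. a k * cnj (a k) + b k * cnj (b k) = 1"
  shows "ptrace A W (tensor_power_mixture A K p a b) = tensor_power_mixture W K p a b"
proof (intro ext)
  fix u v
  show "ptrace A W (tensor_power_mixture A K p a b) u v = tensor_power_mixture W K p a b u v"
  proof (cases "u \<subseteq> W \<and> v \<subseteq> W")
    case True
    then have "u \<union> z \<subseteq> A" "v \<union> z \<subseteq> A" if "z \<in> Pow (A - W)" for z using that W by auto
    then have "ptrace A W (tensor_power_mixture A K p a b) u v =
        (\<Sum>k<K. complex_of_real (p k) * (\<Sum>z\<in>Pow (A - W). tensor_power (card A) (a k) (b k) (u \<union> z) *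
          cnj (tensor_power (card A) (a k) (b k) (v \<union> z))))"
      using True unfolding ptrace_def tensor_power_mixture_def
      by (simp add: sum.swap[of _ "Pow (A - W)"] sum_distrib_left mult.assoc)
    also have "\<dots> = tensor_power_mixture W K p a b u v"
      using True norm sum_Pow_tensor_power_outer[OF A W] unfolding tensor_power_mixture_def
      by (simp add: mult.assoc)
    finally show ?thesis .
  qed (auto simp: ptrace_def tensor_power_mixture_def)
qed

lemma density_tensor_power_mixture:
  assumes A: "finite A" and p: "\<forall>k<K. p k \<ge> 0" "(\<Sum>k<K. p k) = 1"
    and norm: "\<forall>k<K. a k * cnj (a k) + b k * cnj (b k) = 1"
  shows "density A (tensor_power_mixture A K p a b)"
proof -
  have "trace_op A (tensor_power_mixture A K p a b) = ptrace A {} (tensor_power_mixture A K p a b) {} {}"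
    unfolding trace_op_def ptrace_def by simp
  also have "\<dots> = 1"
    using p(2) unfolding ptrace_tensor_power_mixture[OF A empty_subsetI norm]
    by (simp add: tensor_power_mixture_def tensor_power_def flip: of_real_sum)
  moreover have "psd A (tensor_power_mixture A K p a b)"
    by (rule convex_decomposition_psd[where vs = "\<lambda>k. tensor_power (card A) (a k) (b k)", OF _ p(1)])
      (simp add: tensor_power_mixture_def)
  ultimately show ?thesis unfolding density_def by (simp add: tensor_power_mixture_def)
qed

lemma biseparable_tensor_power_mixture:
  assumes A: "finite A" "card A \<ge> 2" and p: "\<forall>k<K. p k \<ge> 0" "(\<Sum>k<K. p k) = 1"
    and norm: "\<forall>k<K. a k * cnj (a k) + b k * cnj (b k) = 1"
  shows "biseparable A (tensor_power_mixture A K p a b)"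
proof -
  obtain t where t: "t \<in> A" using A(2) by fastforce
  have "{t} \<noteq> {}" "{t} \<subset> A" using t A(2) by auto
  moreover have "product_wrt A {t} (tensor_power (card A) (a k) (b k))" for k
    using product_wrt_tensor_power[OF A(1), of "{t}" 1] t by simp
  ultimately have "pure_bisep A (tensor_power (card A) (a k) (b k))" for k
    unfolding pure_bisep_def by blast
  then show ?thesis
    unfolding biseparable_def convex_pure_def
    using p norm unit_vec_tensor_power[OF A(1)]
    by (intro exI[of _ K] exI[of _ p] exI[of _ "\<lambda>k. tensor_power (card A) (a k) (b k)"])
      (auto simp: tensor_power_mixture_def)
qed

lemma card_invariant_fullsep_component:
  fixes p :: "nat \<Rightarrow> real"
  assumes A: "finite A" and M: "card_invariant A M"
    and dec: "\<forall>x\<in>Pow A. \<forall>y\<in>Pow A. M x y = (\<Sum>k<K. complex_of_real (p k) * vs k x * cnj (vs k y))"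
    and p: "\<forall>k<K. p k \<ge> 0" and k: "k < K" "p k > 0"
    and vk: "unit_vec A (vs k)" "pure_fullsep A (vs k)"
  obtains a b where "a * cnj a + b * cnj b = 1"
    "\<And>x y. x \<subseteq> A \<Longrightarrow> y \<subseteq> A \<Longrightarrow>
       vs k x * cnj (vs k y) = tensor_power (card A) a b x * cnj (tensor_power (card A) a b y)"
proof -
  have sym: "symmetric_vec A (vs k)"
    by (rule card_invariant_decomposition_component_symmetric[OF A M dec p k])
  obtain c x0 x1 where "\<And>x. x \<subseteq> A \<Longrightarrow> vs k x = c * tensor_power (card A) x0 x1 x"
    using symmetric_fullsep_vec_eq_tensor_power[OF A sym vk(2)] by blast
  then have "\<forall>x\<subseteq>A. vs k x = c * tensor_power (card A) x0 x1 x" by blast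
  with A vk(1) show ?thesis by (rule unit_vec_scaled_tensor_power) (rule that)
qed

lemma card_invariant_fully_separable_imp_mixture:
  assumes A: "finite A" and M: "card_invariant A M" and fs: "fully_separable A M"
  obtains K p a b where "\<forall>k<K. p k \<ge> 0" "(\<Sum>k<K. p k) = 1"
    "\<forall>k<K. a k * cnj (a k) + b k * cnj (b k) = 1"
    "\<forall>x\<in>Pow A. \<forall>y\<in>Pow A. M x y = tensor_power_mixture A K p a b x y"
proof -
  obtain K :: nat and p :: "nat \<Rightarrow> real" and vs :: "nat \<Rightarrow> qvec"
    where kp: "\<forall>k<K. p k \<ge> 0 \<and> unit_vec A (vs k) \<and> pure_fullsep A (vs k)"
    and p1: "(\<Sum>k<K. p k) = 1"
    and dec: "\<forall>x\<in>Pow A. \<forall>y\<in>Pow A. M x y = (\<Sum>k<K. complex_of_real (p k) * vs k x * cnj (vs k y))"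
    using fs unfolding fully_separable_def convex_pure_def by blast
  have p: "\<forall>k<K. p k \<ge> 0" using kp by blast
  define normalises where "normalises k ab \<longleftrightarrow> fst ab * cnj (fst ab) + snd ab * cnj (snd ab) = 1 \<and>
    (p k > 0 \<longrightarrow> (\<forall>x\<subseteq>A. \<forall>y\<subseteq>A. vs k x * cnj (vs k y) =
       tensor_power (card A) (fst ab) (snd ab) x * cnj (tensor_power (card A) (fst ab) (snd ab) y)))"
    for k ab
  have "\<exists>ab. normalises k ab" if "k \<in> {..<K}" for k
  proof (cases "p k > 0")
    case True
    have k: "k < K" using that by simp
    obtain a b where "a * cnj a + b * cnj b = 1" "\<And>x y. x \<subseteq> A \<Longrightarrow> y \<subseteq> A \<Longrightarrow>
        vs k x * cnj (vs k y) = tensor_power (card A) a b x * cnj (tensor_power (card A) a b y)"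
      by (rule card_invariant_fullsep_component[OF A M dec p k True]) (use kp k in auto)
    then show ?thesis unfolding normalises_def by (intro exI[of _ "(a, b)"]) auto
  next
    case False
    then show ?thesis unfolding normalises_def by (intro exI[of _ "(1, 0)"]) simp
  qed
  then have "\<forall>k\<in>{..<K}. \<exists>ab. normalises k ab" by blast
  from bchoice[OF this] obtain f where f: "\<forall>k\<in>{..<K}. normalises k (f k)" by blast
  show ?thesis
  proof (rule that[of K p "\<lambda>k. fst (f k)" "\<lambda>k. snd (f k)", OF p p1])
    show "\<forall>k<K. fst (f k) * cnj (fst (f k)) + snd (f k) * cnj (snd (f k)) = 1"
      using f unfolding normalises_def by simp
    have "complex_of_real (p k) * vs k x * cnj (vs k y) = complex_of_real (p k) *
        tensor_power (card A) (fst (f k)) (snd (f k)) x * cnj (tensor_power (card A) (fst (f k)) (snd (f k)) y)"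
      if "k < K" "x \<subseteq> A" "y \<subseteq> A" for k x y
      using f p that unfolding normalises_def by (cases "p k > 0") (auto simp: mult.assoc)
    then show "\<forall>x\<in>Pow A. \<forall>y\<in>Pow A. M x y = tensor_power_mixture A K p (\<lambda>k. fst (f k)) (\<lambda>k. snd (f k)) x y"
      using dec unfolding tensor_power_mixture_def by (auto intro!: sum.cong)
  qed
qed

section \<open>Marginals of permutation-invariant operators\<close>

lemma ptrace_eq_0: "\<not> (u \<subseteq> S \<and> v \<subseteq> S) \<Longrightarrow> ptrace A S M u v = 0"
  unfolding ptrace_def by auto

lemma ptrace_ptrace:
  assumes N: "finite N" and WB: "W \<subseteq> B" and BN: "B \<subseteq> N"
  shows "ptrace B W (ptrace N B M) = ptrace N W M"
proof (intro ext)
  fix u v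
  show "ptrace B W (ptrace N B M) u v = ptrace N W M u v"
  proof (cases "u \<subseteq> W \<and> v \<subseteq> W")
    case True
    have fin: "finite (B - W)" "finite (N - B)" using N BN finite_subset by auto
    have NW: "N - W = (B - W) \<union> (N - B)" using WB BN by auto
    have disj: "(B - W) \<inter> (N - B) = {}" by blast
    have "ptrace N W M u v = (\<Sum>z1\<in>Pow (B - W). \<Sum>z2\<in>Pow (N - B). M (u \<union> (z1 \<union> z2)) (v \<union> (z1 \<union> z2)))"
      using True unfolding ptrace_def NW by (simp add: sum_Pow_Un_disjoint[OF fin disj])
    also have "\<dots> = (\<Sum>z1\<in>Pow (B - W). ptrace N B M (u \<union> z1) (v \<union> z1))"
    proof (rule sum.cong[OF refl])
      fix z1 assume "z1 \<in> Pow (B - W)"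
      then have "u \<union> z1 \<subseteq> B" "v \<union> z1 \<subseteq> B" using True WB by auto
      then show "(\<Sum>z2\<in>Pow (N - B). M (u \<union> (z1 \<union> z2)) (v \<union> (z1 \<union> z2))) = ptrace N B M (u \<union> z1) (v \<union> z1)"
        unfolding ptrace_def by (simp add: Un_assoc)
    qed
    also have "\<dots> = ptrace B W (ptrace N B M) u v" using True unfolding ptrace_def[of B W] by simp
    finally show ?thesis by simp
  qed (simp add: ptrace_eq_0)
qed

lemma ptrace_card_invariant_cong:
  assumes N: "finite N" and M: "card_invariant N M"
    and W: "W \<subseteq> N" "W' \<subseteq> N" "card W = card W'"
    and uv: "u \<subseteq> W" "v \<subseteq> W" "u' \<subseteq> W'" "v' \<subseteq> W'" "card u = card u'" "card v = card v'"
  shows "ptrace N W M u v = ptrace N W' M u' v'"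
proof -
  have fin: "finite (N - W)" "finite (N - W')" using N by auto
  have "card (N - W) = card (N - W')" using W N by (simp add: card_Diff_subset finite_subset)
  then obtain h where h: "bij_betw h (N - W) (N - W')" using fin finite_same_card_bij by blast
  have "ptrace N W' M u' v' = (\<Sum>z\<in>Pow (N - W'). M (u' \<union> z) (v' \<union> z))"
    using uv unfolding ptrace_def by simp
  also have "\<dots> = (\<Sum>z\<in>Pow (N - W). M (u' \<union> h ` z) (v' \<union> h ` z))"
    by (rule sum.reindex_bij_betw[OF bij_betw_Pow[OF h], symmetric])
  also have "\<dots> = (\<Sum>z\<in>Pow (N - W). M (u \<union> z) (v \<union> z))"
  proof (rule sum.cong[OF refl])
    fix z assume z: "z \<in> Pow (N - W)"
    have "inj_on h z" using h z by (meson PowD bij_betw_imp_inj_on inj_on_subset)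
    then have "card (h ` z) = card z" by (rule card_image)
    moreover have hz: "h ` z \<subseteq> N - W'" using h z by (auto simp: bij_betw_def)
    moreover have "finite W" "finite W'" using W N by (auto intro: finite_subset)
    then have "finite z" "finite u" "finite v" "finite u'" "finite v'"
      using z fin(1) uv by (auto intro: finite_subset)
    moreover have "u \<inter> z = {}" "v \<inter> z = {}" "u' \<inter> h ` z = {}" "v' \<inter> h ` z = {}"
      using z uv hz by auto
    ultimately have "card (u' \<union> h ` z) = card (u \<union> z)" "card (v' \<union> h ` z) = card (v \<union> z)"
      using uv by (simp_all add: card_Un_disjoint)
    moreover have "u' \<union> h ` z \<subseteq> N" "v' \<union> h ` z \<subseteq> N" "u \<union> z \<subseteq> N" "v \<union> z \<subseteq> N"
      using uv W hz z by auto
    ultimately show "M (u' \<union> h ` z) (v' \<union> h ` z) = M (u \<union> z) (v \<union> z)"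
      by (intro card_invariantD[OF M]) simp_all
  qed
  also have "\<dots> = ptrace N W M u v"
    using uv unfolding ptrace_def by simp
  finally show ?thesis by simp
qed

lemma card_invariant_ptrace:
  assumes "finite N" "card_invariant N M" "W \<subseteq> N"
  shows "card_invariant W (ptrace N W M)"
  unfolding card_invariant_def
proof (intro allI impI)
  fix x y x' y' assume "x \<subseteq> W" "y \<subseteq> W" "x' \<subseteq> W" "y' \<subseteq> W" "card x = card x'" "card y = card y'"
  then show "ptrace N W M x y = ptrace N W M x' y'"
    by (rule ptrace_card_invariant_cong[OF assms assms(3) refl])
qed

text \<open>Relabel \<open>W\<close> into \<open>S\<close>, where the smaller marginal is a partial trace of the common one.\<close>
lemma ptrace_eq_of_card_le:
  assumes N: "finite N" and M: "card_invariant N M" and M': "card_invariant N M'"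
    and S: "S \<subseteq> N" "ptrace N S M = ptrace N S M'"
    and W: "W \<subseteq> N" "card W \<le> card S"
  shows "ptrace N W M = ptrace N W M'"
proof (intro ext)
  fix u v
  show "ptrace N W M u v = ptrace N W M' u v"
  proof (cases "u \<subseteq> W \<and> v \<subseteq> W")
    case True
    have fin: "finite S" "finite W" using N S W finite_subset by auto
    obtain W1 where W1: "W1 \<subseteq> S" "card W1 = card W" using obtain_subset_with_card_n[OF W(2)] by blast
    have "card u \<le> card W1" "card v \<le> card W1" using True fin W1 by (auto intro: card_mono)
    obtain u1 where u1: "u1 \<subseteq> W1" "card u1 = card u"
      using obtain_subset_with_card_n[OF \<open>card u \<le> card W1\<close>] by blast
    obtain v1 where v1: "v1 \<subseteq> W1" "card v1 = card v"
      using obtain_subset_with_card_n[OF \<open>card v \<le> card W1\<close>] by blast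
    have W1N: "W1 \<subseteq> N" using W1 S by auto
    have "ptrace N W M u v = ptrace N W1 M u1 v1"
      using True u1 v1 by (intro ptrace_card_invariant_cong[OF N M W(1) W1N W1(2)[symmetric]]) auto
    also have "\<dots> = ptrace N W1 M' u1 v1"
      unfolding ptrace_ptrace[OF N W1(1) S(1), symmetric] S(2) ..
    also have "\<dots> = ptrace N W M' u v"
      using True u1 v1 by (intro ptrace_card_invariant_cong[OF N M' W1N W(1) W1(2)]) auto
    finally show ?thesis .
  qed (simp add: ptrace_eq_0)
qed

lemma sum_swap_diag_ptrace:
  assumes N: "finite N" and S: "S \<subseteq> N" and ij: "i \<in> S" "j \<in> S"
  shows "(\<Sum>x\<in>Pow N. M (swap_lbl i j x) x) = (\<Sum>u\<in>Pow S. ptrace N S M (swap_lbl i j u) u)"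
proof -
  have fin: "finite S" "finite (N - S)" using N S finite_subset by auto
  have "(\<Sum>x\<in>Pow N. M (swap_lbl i j x) x) =
      (\<Sum>u\<in>Pow S. \<Sum>z\<in>Pow (N - S). M (swap_lbl i j (u \<union> z)) (u \<union> z))"
    using sum_Pow_Un_disjoint[OF fin, of "\<lambda>x. M (swap_lbl i j x) x"] S by (simp add: Un_absorb1)
  also have "\<dots> = (\<Sum>u\<in>Pow S. ptrace N S M (swap_lbl i j u) u)"
  proof (rule sum.cong[OF refl])
    fix u assume "u \<in> Pow S"
    moreover have "swap_lbl i j (u \<union> z) = swap_lbl i j u \<union> z" if "z \<in> Pow (N - S)" for z
      using swap_lbl_Un_disjoint[OF ij] that by blast
    ultimately show "(\<Sum>z\<in>Pow (N - S). M (swap_lbl i j (u \<union> z)) (u \<union> z)) = ptrace N S M (swap_lbl i j u) u"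
      using swap_lbl_subset[OF ij] unfolding ptrace_def by simp
  qed
  finally show ?thesis .
qed

text \<open>As \<open>P\<^sub>i\<^sub>j\<close> acts inside \<open>S\<close>, \<open>tr (\<sigma> P\<^sub>i\<^sub>j) = tr (\<rho> P\<^sub>i\<^sub>j) = tr \<rho> = tr \<sigma>\<close>.\<close>
lemma ptrace_eq_imp_swap_invariant:
  assumes N: "finite N" and \<sigma>: "density N \<sigma>" and \<rho>: "density N \<rho>" "swap_invariant N \<rho> i j"
    and S: "S \<subseteq> N" "i \<in> S" "j \<in> S" and eq: "ptrace N S \<sigma> = ptrace N S \<rho>"
  shows "swap_invariant N \<sigma> i j"
proof (rule psd_swap_trace_imp_swap_invariant)
  show "psd N \<sigma>" using \<sigma> unfolding density_def by blast
  show ij: "i \<in> N" "j \<in> N" using S by auto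
  have "(\<Sum>x\<in>Pow N. \<sigma> (swap_lbl i j x) x) = (\<Sum>x\<in>Pow N. \<rho> (swap_lbl i j x) x)"
    unfolding sum_swap_diag_ptrace[OF N S] eq ..
  also have "\<dots> = trace_op N \<rho>" using \<rho>(2) unfolding swap_invariant_def trace_op_def by simp
  also have "\<dots> = trace_op N \<sigma>" using \<rho>(1) \<sigma> unfolding density_def by simp
  finally show "(\<Sum>x\<in>Pow N. \<sigma> (swap_lbl i j x) x) = trace_op N \<sigma>" .
qed (fact N)

lemma hyp_connected_relates_all:
  assumes conn: "hyp_connected V \<SS>"
    and refl: "\<And>i. i \<in> V \<Longrightarrow> R i i"
    and trans: "\<And>i j k. i \<in> V \<Longrightarrow> j \<in> V \<Longrightarrow> k \<in> V \<Longrightarrow> R i j \<Longrightarrow> R j k \<Longrightarrow> R i k"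
    and edge: "\<And>S i j. S \<in> \<SS> \<Longrightarrow> i \<in> S \<Longrightarrow> j \<in> S \<Longrightarrow> R i j"
    and ij: "i \<in> V" "j \<in> V"
  shows "R i j"
proof -
  define X where "X = {j\<in>V. R i j}"
  have "X = V"
  proof (rule ccontr)
    assume "X \<noteq> V"
    moreover have "i \<in> X" unfolding X_def using ij refl by blast
    moreover have "X \<subseteq> V" unfolding X_def by blast
    ultimately have "X \<noteq> {}" "V - X \<noteq> {}" "X \<inter> (V - X) = {}" "X \<union> (V - X) = V" by auto
    then obtain S where S: "S \<in> \<SS>" "S \<inter> X \<noteq> {}" "S \<inter> (V - X) \<noteq> {}"
      using conn[unfolded hyp_connected_def, rule_format, of X "V - X"] by blast
    then obtain a b where ab: "a \<in> S" "a \<in> X" "b \<in> S" "b \<in> V - X" by blast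
    then have "R i a" "a \<in> V" "b \<in> V" unfolding X_def by auto
    with ij(1) have "R i b" using trans edge[OF S(1) ab(1,3)] by blast
    then show False using ab(4) \<open>b \<in> V\<close> unfolding X_def by blast
  qed
  then show ?thesis using ij unfolding X_def by blast
qed

section \<open>Genuine entanglement and compatible states\<close>

lemma pure_fullsep_if_scaled_tensor_power:
  assumes "finite A" "\<And>x. x \<subseteq> A \<Longrightarrow> v x = c * tensor_power (card A) a b x"
  shows "pure_fullsep A v"
  using pure_fullsep_tensor_power[OF assms(1), of c a b] assms(2)
  unfolding pure_fullsep_def product_wrt_def by simp

text \<open>Components of weight zero need not be symmetric; they are replaced by \<open>|0\<rangle>\<^sup>\<otimes>\<^sup>n\<close>.\<close>
lemma card_invariant_biseparable_imp_fully_separable: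
  assumes N: "finite N" and \<rho>: "card_invariant N \<rho>" and bisep: "biseparable N \<rho>"
  shows "fully_separable N \<rho>"
proof -
  obtain K :: nat and p :: "nat \<Rightarrow> real" and vs :: "nat \<Rightarrow> qvec"
    where kp: "\<forall>k<K. p k \<ge> 0 \<and> unit_vec N (vs k) \<and> pure_bisep N (vs k)"
    and p1: "(\<Sum>k<K. p k) = 1"
    and dec: "\<forall>x\<in>Pow N. \<forall>y\<in>Pow N. \<rho> x y = (\<Sum>k<K. complex_of_real (p k) * vs k x * cnj (vs k y))"
    using bisep unfolding biseparable_def convex_pure_def by blast
  have p: "\<forall>k<K. p k \<ge> 0" using kp by blast
  define e0 where "e0 = tensor_power (card N) 1 0"
  define vs' where "vs' k = (if p k > 0 then vs k else e0)" for k
  have "unit_vec N (vs' k) \<and> pure_fullsep N (vs' k)" if k: "k < K" for k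
  proof (cases "p k > 0")
    case True
    have "symmetric_vec N (vs k)"
      by (rule card_invariant_decomposition_component_symmetric[OF N \<rho> dec p k True])
    moreover obtain S where "S \<noteq> {}" "S \<subset> N" "product_wrt N S (vs k)"
      using kp k unfolding pure_bisep_def by blast
    ultimately obtain c x0 x1 where "\<And>x. x \<subseteq> N \<Longrightarrow> vs k x = c * tensor_power (card N) x0 x1 x"
      using symmetric_product_vec_eq_tensor_power[OF N, of S "vs k"] by blast
    then show ?thesis
      using kp k True pure_fullsep_if_scaled_tensor_power[OF N] unfolding vs'_def by auto
  next
    case False
    then show ?thesis unfolding vs'_def e0_def
      using unit_vec_tensor_power[OF N, of 1 0] pure_fullsep_tensor_power[OF N, of 1 1 0] by simp
  qed
  moreover have "complex_of_real (p k) * vs k x * cnj (vs k y) = complex_of_real (p k) * vs' k x * cnj (vs' k y)"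
    if "k < K" for k x y
    using p that unfolding vs'_def by (cases "p k > 0") auto
  ultimately show ?thesis
    unfolding fully_separable_def convex_pure_def using p p1 dec
    by (intro exI[of _ K] exI[of _ p] exI[of _ vs']) (auto intro!: sum.cong)
qed

lemma compat_card_invariant:
  assumes N: "finite N" and \<sigma>: "density N \<sigma>" and \<rho>: "density N \<rho>" "card_invariant N \<rho>"
    and \<SS>: "\<SS> \<subseteq> Pow N" "hyp_connected N \<SS>" and eq: "\<forall>S\<in>\<SS>. ptrace N S \<sigma> = ptrace N S \<rho>"
  shows "card_invariant N \<sigma>"
proof (rule psd_swap_invariant_imp_card_invariant[OF _ N])
  show "psd N \<sigma>" using \<sigma> unfolding density_def by blast
  have edge: "swap_invariant N \<sigma> i j" if "S \<in> \<SS>" "i \<in> S" "j \<in> S" for S i j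
  proof (rule ptrace_eq_imp_swap_invariant[OF N \<sigma> \<rho>(1) _ _ that(2,3)])
    show "S \<subseteq> N" using that \<SS>(1) by blast
    then show "swap_invariant N \<rho> i j" using card_invariant_imp_swap_invariant[OF \<rho>(2)] that by blast
    show "ptrace N S \<sigma> = ptrace N S \<rho>" using eq that by blast
  qed
  show "\<forall>i\<in>N. \<forall>j\<in>N. swap_invariant N \<sigma> i j"
    using hyp_connected_relates_all[OF \<SS>(2), where R = "swap_invariant N \<sigma>"]
      swap_invariant_refl swap_invariant_trans edge by blast
qed

lemma l_param_attained:
  assumes "\<not> biseparable (qubits n) \<rho>"
  obtains \<SS> where "detects_GME n \<rho> \<SS>" "\<forall>S\<in>\<SS>. card S \<le> l_param n \<rho>"
proof -
  let ?N = "qubits n"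
  have "detects_GME n \<rho> {?N}"
    unfolding detects_GME_def
  proof (intro conjI ballI)
    fix \<sigma> assume "\<sigma> \<in> compat n \<rho> {?N}"
    then have eq: "ptrace ?N ?N \<sigma> = ptrace ?N ?N \<rho>" unfolding compat_def by simp
    have "\<sigma> x y = \<rho> x y" if "x \<subseteq> ?N" "y \<subseteq> ?N" for x y
      using fun_cong[OF fun_cong[OF eq, of x], of y] that unfolding ptrace_def by simp
    then have "\<forall>x\<in>Pow ?N. \<forall>y\<in>Pow ?N. \<sigma> x y = \<rho> x y" by blast
    then have "biseparable ?N \<sigma> = biseparable ?N \<rho>" unfolding biseparable_def convex_pure_def by simp
    then show "genuinely_entangled ?N \<sigma>" using assms unfolding genuinely_entangled_def by simp
  qed simp
  then have "\<exists>\<SS>. detects_GME n \<rho> \<SS> \<and> (\<forall>S\<in>\<SS>. card S \<le> card ?N)" by blast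
  then have "\<exists>\<SS>. detects_GME n \<rho> \<SS> \<and> (\<forall>S\<in>\<SS>. card S \<le> l_param n \<rho>)"
    unfolding l_param_def by (rule LeastI)
  then show ?thesis using that by blast
qed

text \<open>The extension is the same mixture of tensor powers on all qubits.\<close>
lemma fully_separable_marginal_extends:
  assumes N: "finite N" "card N \<ge> 2" and \<sigma>: "card_invariant N \<sigma>"
    and T: "T \<subseteq> N" and fs: "fully_separable T (ptrace N T \<sigma>)"
  obtains \<tau> where "density N \<tau>" "biseparable N \<tau>"
    "\<And>W. W \<subseteq> N \<Longrightarrow> card W \<le> card T \<Longrightarrow> ptrace N W \<tau> = ptrace N W \<sigma>"
proof -
  have fT: "finite T" using N T finite_subset by auto
  obtain K p a b where p: "\<forall>k<K. p k \<ge> 0" "(\<Sum>k<K. p k) = 1"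
    and norm: "\<forall>k<K. a k * cnj (a k) + b k * cnj (b k) = 1"
    and mix: "\<forall>x\<in>Pow T. \<forall>y\<in>Pow T. ptrace N T \<sigma> x y = tensor_power_mixture T K p a b x y"
    using card_invariant_fully_separable_imp_mixture[OF fT card_invariant_ptrace[OF N(1) \<sigma> T] fs] by blast
  let ?\<tau> = "tensor_power_mixture N K p a b"
  have "ptrace N T ?\<tau> = ptrace N T \<sigma>"
    unfolding ptrace_tensor_power_mixture[OF N(1) T norm]
    using mix by (auto simp: fun_eq_iff ptrace_eq_0 tensor_power_mixture_def)
  then have "ptrace N W ?\<tau> = ptrace N W \<sigma>" if "W \<subseteq> N" "card W \<le> card T" for W
    using ptrace_eq_of_card_le[OF N(1) card_invariant_tensor_power_mixture \<sigma> T _ that] by blast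
  with density_tensor_power_mixture[OF N(1) p norm] biseparable_tensor_power_mixture[OF N p norm]
  show ?thesis by (rule that)
qed

theorem proposition4:
  fixes n :: nat and \<rho> :: qop and \<SS> :: "nat set set"
  assumes "n \<ge> 2"
    and "density (qubits n) \<rho>"
    and "entangled (qubits n) \<rho>"
    and "symmetric_state (qubits n) \<rho>"
    and "\<SS> \<subseteq> Pow (qubits n)"
    and "hyp_connected (qubits n) \<SS>"
    and "\<exists>S\<in>\<SS>. card S \<ge> l_param n \<rho>"
  shows "\<forall>\<sigma>\<in>compat n \<rho> \<SS>. \<forall>T. T \<subseteq> qubits n \<and> card T \<ge> l_param n \<rho> \<longrightarrow>
           entangled T (ptrace (qubits n) T \<sigma>)"
proof (intro ballI allI impI)
  fix \<sigma> T assume \<sigma>: "\<sigma> \<in> compat n \<rho> \<SS>" and T: "T \<subseteq> qubits n \<and> card T \<ge> l_param n \<rho>"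
  let ?N = "qubits n"
  have N: "finite ?N" "card ?N \<ge> 2" using assms(1) by (simp_all add: qubits_def)
  have \<rho>: "card_invariant ?N \<rho>"
    using symmetric_state_card_invariant[OF N(1) _ assms(4)] assms(2) unfolding density_def by blast
  then have "\<not> biseparable ?N \<rho>"
    using card_invariant_biseparable_imp_fully_separable[OF N(1)] assms(3) unfolding entangled_def by blast
  then obtain \<SS>' where det: "detects_GME n \<rho> \<SS>'" and small: "\<forall>W\<in>\<SS>'. card W \<le> l_param n \<rho>"
    by (rule l_param_attained)
  have \<sigma>N: "density ?N \<sigma>" "\<forall>S\<in>\<SS>. ptrace ?N S \<sigma> = ptrace ?N S \<rho>" using \<sigma> unfolding compat_def by auto
  have \<sigma>: "card_invariant ?N \<sigma>" by (rule compat_card_invariant[OF N(1) \<sigma>N(1) assms(2) \<rho> assms(5,6) \<sigma>N(2)])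
  obtain S0 where S0: "S0 \<in> \<SS>" "card S0 \<ge> l_param n \<rho>" using assms(7) by blast
  show "entangled T (ptrace ?N T \<sigma>)"
    unfolding entangled_def
  proof
    assume "fully_separable T (ptrace ?N T \<sigma>)"
    then obtain \<tau> where \<tau>: "density ?N \<tau>" "biseparable ?N \<tau>"
      and marg: "\<And>W. W \<subseteq> ?N \<Longrightarrow> card W \<le> card T \<Longrightarrow> ptrace ?N W \<tau> = ptrace ?N W \<sigma>"
      using fully_separable_marginal_extends[OF N \<sigma>] T by blast
    have "ptrace ?N W \<tau> = ptrace ?N W \<rho>" if "W \<in> \<SS>'" for W
    proof -
      have W: "W \<subseteq> ?N" "card W \<le> l_param n \<rho>" using that det small unfolding detects_GME_def by auto
      then have "ptrace ?N W \<sigma> = ptrace ?N W \<rho>"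
        using ptrace_eq_of_card_le[OF N(1) \<sigma> \<rho> _ _ W(1)] S0 assms(5) \<sigma>N(2) by auto
      then show ?thesis using marg[OF W(1)] W(2) T by simp
    qed
    then have "\<tau> \<in> compat n \<rho> \<SS>'" using \<tau>(1) unfolding compat_def by blast
    then show False using det \<tau>(2) unfolding detects_GME_def genuinely_entangled_def by blast
  qed
qed

end
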